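(* Let $X$ be a well-filtered coherent space. If $X\times X$ is a Fréchet space, then $X$ is sober.
   Context: Spaces are $T_0$; the specialization order is $x\le y$ iff $x\in\overline{\{y\}}$, and a subset is saturated if it is an upper set in this order. $X$ is well-filtered if for every filtered family $\mathcal F$ of compact saturated subsets and every open $U$, $\bigcap\mathcal F\subseteq U$ implies $F\subseteq U$ for some $F\in\mathcal F$. $X$ is coherent if the intersection of any two compact saturated subsets is compact. A space is Fréchet if whenever $x$ lies in the closure of a set $A$, some sequence in $A$ converges to $x$. A $T_0$ space is sober if every irreducible closed set equals $\overline{\{x\}}$ for some point $x$. *)

theory Defs
  imports "HOL-Analysis.Analysis"
begin

definition spec_le :: "'a topology \<Rightarrow> 'a \<Rightarrow> 'a \<Rightarrow> bool" where
  "spec_le X x y \<longleftrightarrow> x \<in> topspace X \<and> y \<in> topspace X \<and> x \<in> X closure_of {y}"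

definition saturated_in :: "'a topology \<Rightarrow> 'a set \<Rightarrow> bool" where
  "saturated_in X A \<longleftrightarrow> A \<subseteq> topspace X \<and> (\<forall>x\<in>A. \<forall>y. spec_le X x y \<longrightarrow> y \<in> A)"

definition compact_saturated :: "'a topology \<Rightarrow> 'a set \<Rightarrow> bool" where
  "compact_saturated X K \<longleftrightarrow> compactin X K \<and> saturated_in X K"

definition filtered_family :: "'a set set \<Rightarrow> bool" where
  "filtered_family \<F> \<longleftrightarrow> \<F> \<noteq> {} \<and> (\<forall>F1\<in>\<F>. \<forall>F2\<in>\<F>. \<exists>F3\<in>\<F>. F3 \<subseteq> F1 \<inter> F2)"

definition well_filtered :: "'a topology \<Rightarrow> bool" where
  "well_filtered X \<longleftrightarrow>
     (\<forall>\<F> U. filtered_family \<F> \<and> (\<forall>K\<in>\<F>. compact_saturated X K) \<and> openin X U \<and> \<Inter>\<F> \<subseteq> U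
        \<longrightarrow> (\<exists>F\<in>\<F>. F \<subseteq> U))"

definition coherent_space :: "'a topology \<Rightarrow> bool" where
  "coherent_space X \<longleftrightarrow>
     (\<forall>K1 K2. compact_saturated X K1 \<and> compact_saturated X K2 \<longrightarrow> compactin X (K1 \<inter> K2))"

definition frechet_space :: "'a topology \<Rightarrow> bool" where
  "frechet_space X \<longleftrightarrow>
     (\<forall>A x. A \<subseteq> topspace X \<and> x \<in> X closure_of A \<longrightarrow>
        (\<exists>s. (\<forall>n. s n \<in> A) \<and> limitin X s x sequentially))"

definition irreducible_closed :: "'a topology \<Rightarrow> 'a set \<Rightarrow> bool" where
  "irreducible_closed X A \<longleftrightarrow> closedin X A \<and> A \<noteq> {} \<and>
     (\<forall>B C. closedin X B \<and> closedin X C \<and> A \<subseteq> B \<union> C \<longrightarrow> A \<subseteq> B \<or> A \<subseteq> C)"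

definition sober_space :: "'a topology \<Rightarrow> bool" where
  "sober_space X \<longleftrightarrow> t0_space X \<and>
     (\<forall>A. irreducible_closed X A \<longrightarrow> (\<exists>x\<in>topspace X. A = X closure_of {x}))"

end

theory Submission
  imports Defs
begin

text \<open>In a well-filtered space every nonempty closed set that is directed in the specialization
  order is the closure of a point: the principal up-sets of its points form a filtered family of
  compact saturated sets, each meeting the set, so their intersection meets it in a point above
  all others. It therefore suffices to show that irreducible closed sets are directed.
  For \<open>a, b \<in> A\<close> irreducibility puts \<open>(a, b)\<close> in the closure of the diagonal of \<open>A\<close>, and the
  Frechet property of \<open>X \<times> X\<close> yields one sequence \<open>t\<close> in \<open>A\<close> converging to both \<open>a\<close> and \<open>b\<close>.
  The saturations of \<open>{a} \<union> tail\<close> and \<open>{b} \<union> tail\<close> are compact, so by coherence their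
  intersections form a decreasing sequence of compact saturated sets meeting \<open>A\<close>; a point of \<open>A\<close>
  in all of them lies above both \<open>a\<close> and \<open>b\<close>.\<close>

lemma spec_le_iff_open:
  "spec_le X x y \<longleftrightarrow> x \<in> topspace X \<and> y \<in> topspace X \<and> (\<forall>U. openin X U \<and> x \<in> U \<longrightarrow> y \<in> U)"
  unfolding spec_le_def in_closure_of by blast

lemma spec_le_refl: "x \<in> topspace X \<Longrightarrow> spec_le X x x"
  by (simp add: spec_le_iff_open)

lemma spec_le_trans: "spec_le X x y \<Longrightarrow> spec_le X y z \<Longrightarrow> spec_le X x z"
  by (simp add: spec_le_iff_open)

lemma openin_spec_le_upward: "openin X U \<Longrightarrow> x \<in> U \<Longrightarrow> spec_le X x y \<Longrightarrow> y \<in> U"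
  by (simp add: spec_le_iff_open)

lemma spec_le_topspace: "spec_le X x y \<Longrightarrow> x \<in> topspace X \<and> y \<in> topspace X"
  by (simp add: spec_le_def)

definition saturation :: "'a topology \<Rightarrow> 'a set \<Rightarrow> 'a set" where
  "saturation X K = {y \<in> topspace X. \<exists>x\<in>K. spec_le X x y}"

lemma saturation_subset_topspace: "saturation X K \<subseteq> topspace X"
  unfolding saturation_def by blast

lemma subset_saturation: "K \<subseteq> topspace X \<Longrightarrow> K \<subseteq> saturation X K"
  unfolding saturation_def by (auto intro: spec_le_refl)

lemma saturation_mono: "K \<subseteq> L \<Longrightarrow> saturation X K \<subseteq> saturation X L"
  unfolding saturation_def by blast

lemma saturated_in_saturation: "saturated_in X (saturation X K)"
  unfolding saturated_in_def saturation_def by (blast intro: spec_le_trans dest: spec_le_topspace)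

lemma saturated_in_Int: "saturated_in X A \<Longrightarrow> saturated_in X B \<Longrightarrow> saturated_in X (A \<inter> B)"
  unfolding saturated_in_def by blast

lemma compactin_saturation:
  assumes K: "compactin X K"
  shows "compactin X (saturation X K)"
  unfolding compactin_def
proof (intro conjI saturation_subset_topspace allI impI, elim conjE)
  fix \<U> assume opens: "\<forall>U\<in>\<U>. openin X U" and cover: "saturation X K \<subseteq> \<Union>\<U>"
  have "K \<subseteq> \<Union>\<U>"
    using subset_saturation[OF compactin_subset_topspace[OF K]] cover by (rule subset_trans)
  then obtain \<V> where \<V>: "finite \<V>" "\<V> \<subseteq> \<U>" "K \<subseteq> \<Union>\<V>"
    using compactinD[OF K, of \<U>] opens by blast
  have "saturation X K \<subseteq> \<Union>\<V>"
  proof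
    fix y assume "y \<in> saturation X K"
    then obtain x where x: "x \<in> K" "spec_le X x y"
      unfolding saturation_def by blast
    then obtain V where V: "V \<in> \<V>" "x \<in> V"
      using \<V>(3) by blast
    then have "openin X V"
      using opens \<V>(2) by blast
    then have "y \<in> V"
      using V(2) x(2) by (rule openin_spec_le_upward)
    with V(1) show "y \<in> \<Union>\<V>" by blast
  qed
  with \<V>(1,2) show "\<exists>\<V>. finite \<V> \<and> \<V> \<subseteq> \<U> \<and> saturation X K \<subseteq> \<Union>\<V>" by blast
qed

lemma compact_saturated_saturation: "compactin X K \<Longrightarrow> compact_saturated X (saturation X K)"
  by (simp add: compact_saturated_def compactin_saturation saturated_in_saturation)

lemma filtered_family_range_decseq:
  fixes M :: "nat \<Rightarrow> 'a set"
  assumes "decseq M"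
  shows "filtered_family (range M)"
  unfolding filtered_family_def
proof (intro conjI ballI)
  fix F1 F2 assume "F1 \<in> range M" "F2 \<in> range M"
  then obtain m n where "F1 = M m" "F2 = M n" by blast
  then have "M (max m n) \<subseteq> F1 \<inter> F2"
    using assms unfolding decseq_def by simp
  then show "\<exists>F3\<in>range M. F3 \<subseteq> F1 \<inter> F2" by blast
qed simp

lemma well_filtered_Inter_meets_closed:
  assumes wf: "well_filtered X" and \<F>: "filtered_family \<F>" "\<forall>K\<in>\<F>. compact_saturated X K"
    and A: "closedin X A" "\<forall>K\<in>\<F>. K \<inter> A \<noteq> {}"
  shows "\<Inter>\<F> \<inter> A \<noteq> {}"
proof
  assume "\<Inter>\<F> \<inter> A = {}"
  moreover obtain K0 where "K0 \<in> \<F>"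
    using \<F>(1) unfolding filtered_family_def by blast
  moreover have "K0 \<subseteq> topspace X"
    using \<F>(2) \<open>K0 \<in> \<F>\<close> compactin_subset_topspace unfolding compact_saturated_def by blast
  ultimately have "\<Inter>\<F> \<subseteq> topspace X - A" by blast
  moreover have "openin X (topspace X - A)"
    using A(1) by (simp add: openin_diff)
  ultimately obtain K where "K \<in> \<F>" "K \<subseteq> topspace X - A"
    using wf[unfolded well_filtered_def, rule_format, of \<F> "topspace X - A"] \<F> by blast
  with A(2) show False by blast
qed

lemma well_filtered_directed_closed_eq_closure_of_point:
  assumes wf: "well_filtered X" and A: "closedin X A" "A \<noteq> {}"
    and directed: "\<And>a b. a \<in> A \<Longrightarrow> b \<in> A \<Longrightarrow> \<exists>c\<in>A. spec_le X a c \<and> spec_le X b c"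
  shows "\<exists>x\<in>A. A = X closure_of {x}"
proof -
  have A_sub: "A \<subseteq> topspace X"
    using A closedin_subset by blast
  define \<F> where "\<F> = (\<lambda>a. saturation X {a}) ` A"
  have "filtered_family \<F>"
    unfolding filtered_family_def
  proof (intro conjI ballI)
    fix F1 F2 assume "F1 \<in> \<F>" "F2 \<in> \<F>"
    then obtain a b where ab: "a \<in> A" "b \<in> A" "F1 = saturation X {a}" "F2 = saturation X {b}"
      unfolding \<F>_def by blast
    then obtain c where c: "c \<in> A" "spec_le X a c" "spec_le X b c"
      using directed by blast
    have "saturation X {c} \<subseteq> F1 \<inter> F2"
      unfolding ab saturation_def using spec_le_trans[OF c(2)] spec_le_trans[OF c(3)] by blast
    then show "\<exists>F3\<in>\<F>. F3 \<subseteq> F1 \<inter> F2"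
      unfolding \<F>_def using c(1) by blast
  qed (simp add: \<F>_def A(2))
  moreover have "\<forall>K\<in>\<F>. compact_saturated X K"
    unfolding \<F>_def using A_sub by (auto intro!: compact_saturated_saturation)
  moreover have "\<forall>K\<in>\<F>. K \<inter> A \<noteq> {}"
  proof
    fix K assume "K \<in> \<F>"
    then obtain a where "a \<in> A" "K = saturation X {a}"
      unfolding \<F>_def by blast
    then show "K \<inter> A \<noteq> {}"
      using subset_saturation[of "{a}" X] A_sub by blast
  qed
  ultimately have "\<Inter>\<F> \<inter> A \<noteq> {}"
    by (rule well_filtered_Inter_meets_closed[OF wf _ _ A(1)])
  then obtain x where x: "x \<in> \<Inter>\<F>" "x \<in> A"
    by blast
  have "spec_le X a x" if "a \<in> A" for a
    using x(1) that unfolding \<F>_def saturation_def by blast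
  then have "A \<subseteq> X closure_of {x}"
    unfolding spec_le_def by blast
  moreover have "X closure_of {x} \<subseteq> A"
    by (rule closure_of_minimal) (use x(2) A(1) in auto)
  ultimately show ?thesis
    using x(2) by blast
qed

lemma spec_le_limit_of_saturated_tails:
  assumes lim: "limitin X t a sequentially"
    and y: "\<And>N. y \<in> saturation X (insert a (t ` {N..}))"
  shows "spec_le X a y"
  unfolding spec_le_iff_open
proof (intro conjI allI impI)
  show "a \<in> topspace X"
    using lim limitin_topspace by metis
  show "y \<in> topspace X"
    using saturation_subset_topspace y[of 0] by (rule subsetD)
next
  fix U assume U: "openin X U \<and> a \<in> U"
  then obtain N where N: "\<And>n. N \<le> n \<Longrightarrow> t n \<in> U"
    using lim unfolding limitin_sequentially by meson
  obtain x where x: "x \<in> insert a (t ` {N..})" "spec_le X x y"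
    using y[of N] unfolding saturation_def by blast
  then have "x \<in> U"
    using N U by blast
  then show "y \<in> U"
    using openin_spec_le_upward[of X U x y] U x(2) by blast
qed

lemma well_filtered_coherent_common_limits_bounded:
  assumes wf: "well_filtered X" and coh: "coherent_space X" and A: "closedin X A"
    and t: "\<And>n. t n \<in> A"
    and lim_a: "limitin X t a sequentially" and lim_b: "limitin X t b sequentially"
  shows "\<exists>y\<in>A. spec_le X a y \<and> spec_le X b y"
proof -
  have t_sub: "range t \<subseteq> topspace X"
    using t A closedin_subset by blast
  define S where "S c N = saturation X (insert c (t ` {N..}))" for c N
  define M where "M N = S a N \<inter> S b N" for N
  have S: "compact_saturated X (S c N)" if "limitin X t c sequentially" for c N
    unfolding S_def using that t_sub
    by (auto intro!: compact_saturated_saturation compactin_sequence_with_limit)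
  have "compact_saturated X (M N)" for N
  proof -
    have "compactin X (M N)"
      using coh[unfolded coherent_space_def] S[OF lim_a] S[OF lim_b] unfolding M_def by blast
    moreover have "saturated_in X (M N)"
      using S[OF lim_a] S[OF lim_b] saturated_in_Int
      unfolding M_def compact_saturated_def by blast
    ultimately show ?thesis
      unfolding compact_saturated_def by blast
  qed
  moreover have "filtered_family (range M)"
  proof (rule filtered_family_range_decseq, rule antimonoI)
    show "M n \<subseteq> M m" if "m \<le> n" for m n
      unfolding M_def S_def using that
      by (intro Int_mono saturation_mono insert_mono image_mono) auto
  qed
  moreover have "t N \<in> M N \<inter> A" for N
    using t[of N] spec_le_refl[of "t N" X] t_sub unfolding M_def S_def saturation_def by auto
  ultimately have "\<Inter>(range M) \<inter> A \<noteq> {}"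
    using well_filtered_Inter_meets_closed[OF wf, of "range M" A] A by blast
  then obtain y where y: "\<And>N. y \<in> M N" "y \<in> A"
    by blast
  have "spec_le X a y" "spec_le X b y"
    using spec_le_limit_of_saturated_tails[OF lim_a, of y] spec_le_limit_of_saturated_tails[OF lim_b, of y]
      y(1) unfolding M_def S_def by blast+
  with y(2) show ?thesis by blast
qed

lemma irreducible_closed_pair_in_closure_of_diagonal:
  assumes irr: "irreducible_closed X A" and "a \<in> A" "b \<in> A"
  shows "(a, b) \<in> prod_topology X X closure_of ((\<lambda>x. (x, x)) ` A)"
  unfolding in_closure_of
proof (intro conjI allI impI)
  have A_sub: "A \<subseteq> topspace X"
    using irr closedin_subset unfolding irreducible_closed_def by blast
  then show "(a, b) \<in> topspace (prod_topology X X)"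
    using assms by auto
  fix T assume "(a, b) \<in> T \<and> openin (prod_topology X X) T"
  then obtain U V where UV: "openin X U" "openin X V" "a \<in> U" "b \<in> V" "U \<times> V \<subseteq> T"
    unfolding openin_prod_topology_alt by blast
  have "closedin X (topspace X - U)" "closedin X (topspace X - V)"
    using UV(1,2) by (simp_all add: closedin_diff)
  moreover have "\<not> A \<subseteq> topspace X - U" "\<not> A \<subseteq> topspace X - V"
    using assms(2,3) UV(3,4) by blast+
  ultimately have "\<not> A \<subseteq> (topspace X - U) \<union> (topspace X - V)"
    using irr unfolding irreducible_closed_def by blast
  then obtain x where "x \<in> A" "x \<in> U" "x \<in> V"
    using A_sub by blast
  then show "\<exists>y. y \<in> (\<lambda>x. (x, x)) ` A \<and> y \<in> T"
    using UV by blast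
qed

lemma frechet_square_irreducible_closed_common_limit:
  assumes fr: "frechet_space (prod_topology X X)" and irr: "irreducible_closed X A"
    and "a \<in> A" "b \<in> A"
  obtains t where "\<And>n. t n \<in> A" "limitin X t a sequentially" "limitin X t b sequentially"
proof -
  have "(\<lambda>x. (x, x)) ` A \<subseteq> topspace (prod_topology X X)"
    using irr closedin_subset unfolding irreducible_closed_def by fastforce
  then obtain s where s: "\<And>n. s n \<in> (\<lambda>x. (x, x)) ` A"
      "limitin (prod_topology X X) s (a, b) sequentially"
    using fr irreducible_closed_pair_in_closure_of_diagonal[OF irr assms(3,4)]
    unfolding frechet_space_def by blast
  have "fst (s n) = snd (s n)" for n
    using s(1)[of n] by auto
  then have "fst \<circ> s = snd \<circ> s"
    by (simp add: fun_eq_iff)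
  moreover have "limitin X (fst \<circ> s) a sequentially" "limitin X (snd \<circ> s) b sequentially"
    using s(2) by (simp_all add: limitin_pairwise)
  moreover have "(fst \<circ> s) n \<in> A" for n
    using s(1)[of n] by auto
  ultimately show ?thesis
    using that[of "fst \<circ> s"] by simp
qed

lemma irreducible_closed_directed:
  assumes wf: "well_filtered X" and coh: "coherent_space X"
    and fr: "frechet_space (prod_topology X X)" and irr: "irreducible_closed X A"
    and ab: "a \<in> A" "b \<in> A"
  shows "\<exists>c\<in>A. spec_le X a c \<and> spec_le X b c"
proof -
  obtain t where "\<And>n. t n \<in> A" "limitin X t a sequentially" "limitin X t b sequentially"
    by (metis frechet_square_irreducible_closed_common_limit[OF fr irr ab])
  moreover have "closedin X A"
    using irr unfolding irreducible_closed_def by blast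
  ultimately show ?thesis
    using well_filtered_coherent_common_limits_bounded[OF wf coh] by blast
qed

theorem corollary3p11:
  fixes X :: "'a topology"
  assumes "t0_space X"
    and "well_filtered X"
    and "coherent_space X"
    and "frechet_space (prod_topology X X)"
  shows "sober_space X"
  unfolding sober_space_def
proof (intro conjI allI impI)
  show "t0_space X" by fact
next
  fix A assume irr: "irreducible_closed X A"
  then have A: "closedin X A" "A \<noteq> {}"
    unfolding irreducible_closed_def by blast+
  obtain x where "x \<in> A" "A = X closure_of {x}"
    using well_filtered_directed_closed_eq_closure_of_point[OF assms(2) A
        irreducible_closed_directed[OF assms(2-4) irr]] by blast
  then show "\<exists>x\<in>topspace X. A = X closure_of {x}"
    using A(1) closedin_subset by blast
qed

end
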